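(* With probability $1$, the graphs $G(X^{(n)})$ and $G^\prime(X^{(n)})$ have the same connected components.
   Context: Fix an integer $d\ge2$ and $n\ge1$. $\mathbb{T}_n$ is the torus obtained from $[-n/2,n/2]^d$ by identifying opposite faces, with toroidal distance ${\rm d}_{\mathbb{T}_n}$ and $B^{\mathbb{T}_n}_r(\xi)=\{\eta\in\mathbb{T}_n:{\rm d}_{\mathbb{T}_n}(\xi,\eta)\le r\}$. $R$ is a nonnegative random variable with absolutely continuous distribution such that $\lim_{h\to\infty}h^s\mathbb{P}(R>h)=\beta$ for some $\beta,s\in(0,\infty)$. $X^{(n)}$ is a homogeneous Poisson point process of intensity $1$ on $\mathbb{T}_n$, each point independently marked with a mark in $[0,\infty)$ distributed as $R$ (points written $(\xi,r)$). $G(X^{(n)})$ has vertex set $X^{(n)}$ and a directed edge from $(\xi,r)$ to $(\eta,t)$ whenever $\eta\in B^{\mathbb{T}_n}_r(\xi)$. $G^\prime(X^{(n)})$ has vertex set $X^{(n)}$ and a directed edge from $(\xi,r)$ to $(\eta,t)$ iff $(\eta,t)\in B^{\mathbb{T}_n}_r(\xi)\times[0,r)$ and there is no $(\zeta,w)\in X^{(n)}\cap(B^{\mathbb{T}_n}_r(\xi)\times(t,r))$ with $\eta\in B^{\mathbb{T}_n}_w(\zeta)$. Connected components are taken ignoring edge directions. *)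

theory Defs
  imports "HOL-Probability.Probability"
begin

text \<open>Points of the torus T_n are represented by their representatives in the cube
  [-n/2, n/2]^d, where d = CARD('d).  Marked points are pairs (xi, r).\<close>

definition tor_dist :: "nat \<Rightarrow> real^'d \<Rightarrow> real^'d \<Rightarrow> real" where
  "tor_dist n x y = (INF k \<in> {k :: real^'d. \<forall>i. k $ i \<in> \<int>}. norm (x - y - real n *\<^sub>R k))"

definition torus_cube :: "nat \<Rightarrow> (real^'d) set" where
  "torus_cube n = cbox (\<chi> i. - real n / 2) (\<chi> i. real n / 2)"

definition edges_G :: "nat \<Rightarrow> ((real^'d) \<times> real) set \<Rightarrow> (((real^'d) \<times> real) \<times> ((real^'d) \<times> real)) set" where
  "edges_G n X = {((\<xi>, r), (\<eta>, t)). (\<xi>, r) \<in> X \<and> (\<eta>, t) \<in> X \<and> tor_dist n \<xi> \<eta> \<le> r}"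

definition edges_G' :: "nat \<Rightarrow> ((real^'d) \<times> real) set \<Rightarrow> (((real^'d) \<times> real) \<times> ((real^'d) \<times> real)) set" where
  "edges_G' n X = {((\<xi>, r), (\<eta>, t)). (\<xi>, r) \<in> X \<and> (\<eta>, t) \<in> X \<and>
      tor_dist n \<xi> \<eta> \<le> r \<and> 0 \<le> t \<and> t < r \<and>
      \<not> (\<exists>(\<zeta>, w) \<in> X. tor_dist n \<xi> \<zeta> \<le> r \<and> t < w \<and> w < r \<and> tor_dist n \<zeta> \<eta> \<le> w)}"

definition components :: "'a set \<Rightarrow> ('a \<times> 'a) set \<Rightarrow> 'a set set" where
  "components V E = (\<lambda>u. {v \<in> V. (u, v) \<in> (E \<union> E\<inverse>)\<^sup>*}) ` V"

definition marked_point_law :: "nat \<Rightarrow> real measure \<Rightarrow> ((real^'d) \<times> real) measure" where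
  "marked_point_law n PR = uniform_measure lborel (torus_cube n) \<Otimes>\<^sub>M PR"

text \<open>Poisson process of intensity 1 on T_n with i.i.d. marks: a Poisson(n^d) number N of points,
  together with an i.i.d. sequence of marked points; the configuration is the first N of them.\<close>
definition poisson_space :: "nat \<Rightarrow> real measure \<Rightarrow> (nat \<times> (nat \<Rightarrow> (real^'d) \<times> real)) measure" where
  "poisson_space n PR = measure_pmf (poisson_pmf (real n ^ CARD('d)))
      \<Otimes>\<^sub>M (\<Pi>\<^sub>M i\<in>(UNIV :: nat set). marked_point_law n PR)"

definition config :: "nat \<times> (nat \<Rightarrow> (real^'d) \<times> real) \<Rightarrow> ((real^'d) \<times> real) set" where
  "config c = snd c ` {..<fst c}"

end

theory Submission
  imports Defs
begin

text \<open>Every edge of G' is an edge of G.  Conversely, let (\<xi>, r) \<rightarrow> (\<eta>, t) be an edge of G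
  with t < r.  If it is not an edge of G', some point (\<zeta>, w) with t < w < r and \<zeta> within distance r
  of \<xi> covers \<eta>; then (\<xi>, r) \<rightarrow> (\<zeta>, w) and (\<zeta>, w) \<rightarrow> (\<eta>, t) are again such edges of G,
  each spanning fewer marks, so induction on the number of marks strictly between the two endpoints
  connects (\<xi>, r) and (\<eta>, t) in G'.  Edges between points of equal mark are loops once marks
  are distinct, and a.s. the marks are distinct and nonnegative because they are i.i.d. with an
  absolutely continuous law on [0, \<infinity>).\<close>

lemma tor_dist_commute: "tor_dist n x y = tor_dist n y x"
proof -
  let ?L = "{k :: real^'a. \<forall>i. k $ i \<in> \<int>}"
  have L: "uminus ` ?L = ?L"
  proof (intro equalityI subsetI)
    fix k assume "k \<in> ?L"
    then show "k \<in> uminus ` ?L" by (intro image_eqI[of _ _ "- k"]) (auto simp: Ints_minus)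
  qed (auto simp: Ints_minus)
  have "(\<lambda>k. norm (x - y - real n *\<^sub>R k)) ` ?L = (\<lambda>k. norm (y - x - real n *\<^sub>R k)) ` uminus ` ?L"
  proof -
    have "norm (x - y - c) = norm (y - x - - c)" for c :: "real^'a"
      using norm_minus_cancel[of "x - y - c"] by (simp add: algebra_simps)
    then show ?thesis unfolding image_image by simp
  qed
  then show ?thesis unfolding tor_dist_def L by simp
qed

lemma rtrancl_sym_closure_eq:
  assumes "E' \<subseteq> E" and "E \<subseteq> (E' \<union> E'\<inverse>)\<^sup>*"
  shows "(E \<union> E\<inverse>)\<^sup>* = (E' \<union> E'\<inverse>)\<^sup>*"
proof
  have "E\<inverse> \<subseteq> (E' \<union> E'\<inverse>)\<^sup>*"
    using assms(2) sym_rtrancl[OF sym_Un_converse, of E'] by (auto dest: symD)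
  with assms(2) have "E \<union> E\<inverse> \<subseteq> (E' \<union> E'\<inverse>)\<^sup>*" by blast
  then show "(E \<union> E\<inverse>)\<^sup>* \<subseteq> (E' \<union> E'\<inverse>)\<^sup>*"
    by (metis rtrancl_subset_rtrancl rtrancl_idemp)
  show "(E' \<union> E'\<inverse>)\<^sup>* \<subseteq> (E \<union> E\<inverse>)\<^sup>*"
    using assms(1) by (intro rtrancl_mono) auto
qed

definition marks_between :: "('a \<times> real) set \<Rightarrow> real \<Rightarrow> real \<Rightarrow> ('a \<times> real) set" where
  "marks_between X a b = {p \<in> X. a < snd p \<and> snd p < b}"

lemma card_marks_between_less:
  assumes "finite X" and "p \<in> X" and "a < snd p" "snd p < b"
    and "a \<le> a'" "b' \<le> b" and "\<not> (a' < snd p \<and> snd p < b')"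
  shows "card (marks_between X a' b') < card (marks_between X a b)"
  using assms by (intro psubset_card_mono) (auto simp: marks_between_def)

lemma edges_G'_subset_edges_G: "edges_G' n X \<subseteq> edges_G n X"
  unfolding edges_G'_def edges_G_def by auto

lemma edges_G_descending_in_rtrancl_edges_G':
  assumes fin: "finite X" and nonneg: "\<And>p. p \<in> X \<Longrightarrow> 0 \<le> snd p"
    and "(x, y) \<in> edges_G n X" and "snd y < snd x"
  shows "(x, y) \<in> (edges_G' n X \<union> (edges_G' n X)\<inverse>)\<^sup>*"
  using assms(3,4)
proof (induction "card (marks_between X (snd y) (snd x))" arbitrary: x y rule: less_induct)
  case less
  obtain \<xi> r \<eta> t where xy: "x = (\<xi>, r)" "y = (\<eta>, t)" by fastforce
  show ?case
  proof (cases "(x, y) \<in> edges_G' n X")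
    case False
    with less.prems nonneg[of y] obtain \<zeta> w where
      z: "(\<zeta>, w) \<in> X" "tor_dist n \<xi> \<zeta> \<le> r" "t < w" "w < r" "tor_dist n \<zeta> \<eta> \<le> w"
      unfolding xy edges_G_def edges_G'_def by auto
    have "(x, (\<zeta>, w)) \<in> (edges_G' n X \<union> (edges_G' n X)\<inverse>)\<^sup>*"
      using less.prems z xy
      by (intro less.hyps card_marks_between_less[OF fin z(1)]) (auto simp: edges_G_def)
    moreover have "((\<zeta>, w), y) \<in> (edges_G' n X \<union> (edges_G' n X)\<inverse>)\<^sup>*"
      using less.prems z xy
      by (intro less.hyps card_marks_between_less[OF fin z(1)]) (auto simp: edges_G_def)
    ultimately show ?thesis by (rule rtrancl_trans)
  qed auto
qed

lemma components_edges_G_eq_edges_G':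
  assumes fin: "finite X" and inj: "inj_on snd X" and nonneg: "\<And>p. p \<in> X \<Longrightarrow> 0 \<le> snd p"
  shows "components X (edges_G n X) = components X (edges_G' n X)"
proof -
  have "(x, y) \<in> (edges_G' n X \<union> (edges_G' n X)\<inverse>)\<^sup>*" if xy: "(x, y) \<in> edges_G n X" for x y
  proof (cases "snd y" "snd x" rule: linorder_cases)
    case less
    show ?thesis by (rule edges_G_descending_in_rtrancl_edges_G'[OF fin nonneg xy less])
  next
    case equal
    with xy inj have "x = y" by (auto simp: edges_G_def inj_on_def)
    then show ?thesis by simp
  next
    case greater
    with xy have "(y, x) \<in> edges_G n X"
      using tor_dist_commute[of n "fst x" "fst y"] by (auto simp: edges_G_def)
    from edges_G_descending_in_rtrancl_edges_G'[OF fin nonneg this greater]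
    have "(y, x) \<in> (edges_G' n X \<union> (edges_G' n X)\<inverse>)\<^sup>*" .
    then show ?thesis by (meson sym_Un_converse sym_rtrancl symD)
  qed
  then have "(edges_G n X \<union> (edges_G n X)\<inverse>)\<^sup>* = (edges_G' n X \<union> (edges_G' n X)\<inverse>)\<^sup>*"
    by (intro rtrancl_sym_closure_eq edges_G'_subset_edges_G) auto
  then show ?thesis unfolding components_def by simp
qed

lemma AE_pair_measure_snd:
  assumes "sigma_finite_measure M2" and "AE y in M2. P y"
  shows "AE x in M1 \<Otimes>\<^sub>M M2. P (snd x)"
proof -
  from assms(2) obtain N where N: "{y \<in> space M2. \<not> P y} \<subseteq> N" "emeasure M2 N = 0" "N \<in> sets M2"
    by (rule AE_E)
  have "space M1 \<times> N \<in> null_sets (M1 \<Otimes>\<^sub>M M2)"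
    using N by (intro sigma_finite_measure.times_in_null_sets2[OF assms(1)]) auto
  moreover have "{x \<in> space (M1 \<Otimes>\<^sub>M M2). \<not> P (snd x)} \<subseteq> space M1 \<times> N"
    using N by (auto simp: space_pair_measure)
  ultimately show ?thesis by (rule AE_I')
qed

lemma AE_neq_if_absolutely_continuous:
  fixes c :: "'a :: euclidean_space"
  assumes "absolutely_continuous lborel M"
  shows "AE x in M. x \<noteq> c"
proof -
  have "{c} \<in> null_sets M"
    using assms countable_imp_null_set_lborel[of "{c}"] unfolding absolutely_continuous_def by auto
  then show ?thesis by (auto dest: AE_not_in)
qed

lemma distr_PiM_pair_components:
  assumes "prob_space M" and "i \<noteq> j"
  shows "distr (\<Pi>\<^sub>M k\<in>UNIV. M) (M \<Otimes>\<^sub>M M) (\<lambda>\<omega>. (\<omega> i, \<omega> j)) = M \<Otimes>\<^sub>M M"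
proof -
  interpret prob_space M by fact
  interpret P: product_prob_space "\<lambda>_. M" UNIV by unfold_locales
  have meas: "(\<lambda>\<omega>. (\<omega> i, \<omega> j)) \<in> measurable (\<Pi>\<^sub>M k\<in>UNIV. M) (M \<Otimes>\<^sub>M M)"
    by measurable
  show ?thesis
  proof (rule pair_measure_eqI[symmetric])
    fix A B assume A: "A \<in> sets M" and B: "B \<in> sets M"
    define F where "F k = (if k = i then A else B)" for k
    have "(\<lambda>\<omega>. (\<omega> i, \<omega> j)) -` (A \<times> B) \<inter> space (\<Pi>\<^sub>M k\<in>UNIV. M)
        = {\<omega> \<in> space (\<Pi>\<^sub>M k\<in>UNIV. M). \<forall>k\<in>{i, j}. \<omega> k \<in> F k}"
      using assms(2) by (auto simp: F_def)
    then have "emeasure (distr (\<Pi>\<^sub>M k\<in>UNIV. M) (M \<Otimes>\<^sub>M M) (\<lambda>\<omega>. (\<omega> i, \<omega> j))) (A \<times> B)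
        = emeasure (\<Pi>\<^sub>M k\<in>UNIV. M) {\<omega> \<in> space (\<Pi>\<^sub>M k\<in>UNIV. M). \<forall>k\<in>{i, j}. \<omega> k \<in> F k}"
      using A B meas by (simp add: emeasure_distr)
    also have "\<dots> = (\<Prod>k\<in>{i, j}. emeasure M (F k))"
      using A B by (intro P.emeasure_PiM_Collect) (auto simp: F_def)
    also have "\<dots> = emeasure M A * emeasure M B"
      using assms(2) by (simp add: F_def)
    finally show "emeasure M A * emeasure M B
        = emeasure (distr (\<Pi>\<^sub>M k\<in>UNIV. M) (M \<Otimes>\<^sub>M M) (\<lambda>\<omega>. (\<omega> i, \<omega> j))) (A \<times> B)"
      by simp
  qed (auto intro: prob_space_imp_sigma_finite assms(1))
qed

lemma AE_PiM_inj_if_nonatomic: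
  fixes f :: "'a \<Rightarrow> real"
  assumes M: "prob_space M" and f[measurable]: "f \<in> borel_measurable M"
    and nonatomic: "\<And>c. AE x in M. f x \<noteq> c"
  shows "AE \<omega> in (\<Pi>\<^sub>M k\<in>(UNIV :: 'i :: countable set). M). inj (\<lambda>k. f (\<omega> k))"
proof -
  interpret prob_space M by fact
  interpret pair_sigma_finite M M by unfold_locales
  have distinct: "AE \<omega> in (\<Pi>\<^sub>M k\<in>(UNIV :: 'i set). M). f (\<omega> i) \<noteq> f (\<omega> j)" if "i \<noteq> j" for i j
  proof -
    have "AE p in M \<Otimes>\<^sub>M M. f (fst p) \<noteq> f (snd p)"
    proof (rule AE_pair_measure)
      show "{p \<in> space (M \<Otimes>\<^sub>M M). f (fst p) \<noteq> f (snd p)} \<in> sets (M \<Otimes>\<^sub>M M)"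
        by measurable
      show "AE x in M. AE y in M. f (fst (x, y)) \<noteq> f (snd (x, y))"
      proof (rule AE_I2)
        fix x
        show "AE y in M. f (fst (x, y)) \<noteq> f (snd (x, y))"
          using nonatomic[of "f x"] by (rule eventually_mono) auto
      qed
    qed
    then have "AE p in distr (\<Pi>\<^sub>M k\<in>UNIV. M) (M \<Otimes>\<^sub>M M) (\<lambda>\<omega>. (\<omega> i, \<omega> j)). f (fst p) \<noteq> f (snd p)"
      unfolding distr_PiM_pair_components[OF M that] .
    then have "AE \<omega> in (\<Pi>\<^sub>M k\<in>UNIV. M). (\<lambda>p. f (fst p) \<noteq> f (snd p)) (\<omega> i, \<omega> j)"
      by (rule AE_distrD[rotated]) measurable
    then show ?thesis by simp
  qed
  then have "AE \<omega> in (\<Pi>\<^sub>M k\<in>(UNIV :: 'i set). M). \<forall>i j. i \<noteq> j \<longrightarrow> f (\<omega> i) \<noteq> f (\<omega> j)"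
    unfolding AE_all_countable using distinct by auto
  then show ?thesis by (rule eventually_mono) (auto simp: inj_def)
qed

lemma emeasure_torus_cube: "emeasure lborel (torus_cube n :: (real^'d) set) = ennreal (real n) ^ CARD('d)"
proof -
  have "\<forall>b\<in>(Basis :: (real^'d) set). (\<chi> i. - real n / 2) \<bullet> b \<le> (\<chi> i. real n / 2) \<bullet> b"
    and "\<And>b. b \<in> (Basis :: (real^'d) set) \<Longrightarrow> ((\<chi> i. real n / 2) - (\<chi> i. - real n / 2)) \<bullet> b = real n"
    by (auto simp: Basis_vec_def inner_axis)
  then have "emeasure lborel (torus_cube n :: (real^'d) set) = (\<Prod>b\<in>(Basis :: (real^'d) set). ennreal (real n))"
    unfolding torus_cube_def emeasure_lborel_cbox_eq by (simp add: ennreal_power cong: prod.cong)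
  then show ?thesis by simp
qed

lemma prob_space_marked_point_law:
  assumes "n \<ge> 1" and "prob_space PR"
  shows "prob_space (marked_point_law n PR :: ((real^'d) \<times> real) measure)"
  unfolding marked_point_law_def
  using assms by (intro prob_space_pair prob_space_uniform_measure assms(2)) (auto simp: emeasure_torus_cube ennreal_power)

lemma AE_poisson_space_marks_nonneg_inj:
  assumes n: "n \<ge> 1" and PR: "prob_space PR" "sets PR = sets borel"
    and nonneg: "AE r in PR. 0 \<le> r" and abscont: "absolutely_continuous lborel PR"
  shows "AE c in (poisson_space n PR :: (nat \<times> (nat \<Rightarrow> (real^'d) \<times> real)) measure).
           (\<forall>i. 0 \<le> snd (snd c i)) \<and> inj (\<lambda>i. snd (snd c i))"
proof -
  define M where "M = (marked_point_law n PR :: ((real^'d) \<times> real) measure)"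
  have M: "prob_space M"
    unfolding M_def using n PR(1) by (rule prob_space_marked_point_law)
  have mark_AE: "AE x in M. P (snd x)" if "AE r in PR. P r" for P
    unfolding M_def marked_point_law_def
    using PR(1) that by (intro AE_pair_measure_snd prob_space_imp_sigma_finite)
  have "snd \<in> borel_measurable M"
    using measurable_cong_sets[OF refl PR(2)] unfolding M_def marked_point_law_def by auto
  then have "AE \<omega> in (\<Pi>\<^sub>M i\<in>(UNIV :: nat set). M). inj (\<lambda>i. snd (\<omega> i))"
    using M abscont by (intro AE_PiM_inj_if_nonatomic mark_AE AE_neq_if_absolutely_continuous)
  moreover have "AE \<omega> in (\<Pi>\<^sub>M i\<in>(UNIV :: nat set). M). \<forall>i. 0 \<le> snd (\<omega> i)"
    unfolding AE_all_countable using M nonneg by (auto intro: AE_PiM_component mark_AE)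
  ultimately have "AE \<omega> in (\<Pi>\<^sub>M i\<in>(UNIV :: nat set). M). (\<forall>i. 0 \<le> snd (\<omega> i)) \<and> inj (\<lambda>i. snd (\<omega> i))"
    by (rule AE_conjI[rotated])
  then show ?thesis
    unfolding poisson_space_def M_def[symmetric]
    using M by (intro AE_pair_measure_snd prob_space_imp_sigma_finite prob_space_PiM)
qed

theorem proposition5p1:
  fixes n :: nat and PR :: "real measure" and \<beta> s :: real
  assumes d2: "CARD('d::finite) \<ge> 2"
    and n1: "n \<ge> 1"
    and prob: "prob_space PR"
    and borel: "sets PR = sets borel"
    and nonneg: "AE r in PR. 0 \<le> r"
    and abscont: "absolutely_continuous lborel PR"
    and beta_pos: "0 < \<beta>" and s_pos: "0 < s"
    and tail: "((\<lambda>h. h powr s * measure PR {h<..}) \<longlongrightarrow> \<beta>) at_top"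
  shows "AE c in (poisson_space n PR :: (nat \<times> (nat \<Rightarrow> (real^'d) \<times> real)) measure).
           components (config c) (edges_G n (config c)) = components (config c) (edges_G' n (config c))"
  using AE_poisson_space_marks_nonneg_inj[OF n1 prob borel nonneg abscont]
proof (rule eventually_mono)
  fix c :: "nat \<times> (nat \<Rightarrow> (real^'d) \<times> real)"
  assume marks: "(\<forall>i. 0 \<le> snd (snd c i)) \<and> inj (\<lambda>i. snd (snd c i))"
  show "components (config c) (edges_G n (config c)) = components (config c) (edges_G' n (config c))"
  proof (rule components_edges_G_eq_edges_G')
    show "finite (config c)"
      unfolding config_def by simp
    show "inj_on snd (config c)"
      using marks unfolding config_def by (auto simp: inj_on_def inj_def)
    show "\<And>p. p \<in> config c \<Longrightarrow> 0 \<le> snd p"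
      using marks unfolding config_def by auto
  qed
qed

end
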